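(* Let $N, D, C \in \mathbb{N}$, let $\mathbb{G} = \{0,1\}^{N\times D}\times\{0,1\}^{N\times N}$, let $f:\mathbb{G}\to\{1,\dots,C\}^N$ be a multi-output classifier with components $f_1,\dots,f_N$, and let $(\mathbf{X},\mathbf{A})\in\mathbb{G}$ be a clean graph. Fix the threat-model parameters (global budgets $r_{\mathbf{X}_\mathrm{add}}, r_{\mathbf{X}_\mathrm{del}}, r_{\mathbf{A}_\mathrm{add}}, r_{\mathbf{A}_\mathrm{del}}\in\mathbb{N}_0$, local budgets, and $\sigma$) and let $\mathbb{B}_{\mathcal{G}}$ and $\mathbb{B}_{\mathcal{G}}(\boldsymbol{\rho})$ be as described in the context. Fix a node $n\in\{1,\dots,N\}$, let $\boldsymbol{\psi}^{(n)}\in\{0,1\}^N$ and $\boldsymbol{\Psi}^{(n)}\in\{0,1\}^{N\times N}$ be receptive field indicators of $f_n$, and let $\mathbb{K}^{(n)}$ be a set of certifiable global budgets of $f_n$ (both as defined in the context). Let $(\mathbf{X}',\mathbf{A}')\in\mathbb{B}_{\mathcal{G}}$ be a perturbed graph, and define $\mathbf{X}''\in\{0,1\}^{N\times D}$ and $\mathbf{A}''\in\{0,1\}^{N\times N}$ by $$X''_{i,d} = \psi^{(n)}_i X'_{i,d} + (1-\psi^{(n)}_i) X_{i,d},\qquad A''_{i,j} = \Psi^{(n)}_{i,j} A'_{i,j} + (1-\Psi^{(n)}_{i,j}) A_{i,j}$$ for all $i,j\in\{1,\dots,N\}$, $d\in\{1,\dots,D\}$. If there exists $\boldsymbol{\rho}\in\mathbb{N}_0^4$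 such that $(\mathbf{X}'',\mathbf{A}'')\in\mathbb{B}_{\mathcal{G}}(\boldsymbol{\rho})$ and $\boldsymbol{\rho}\in\mathbb{K}^{(n)}$, then $f_n(\mathbf{X},\mathbf{A}) = f_n(\mathbf{X}',\mathbf{A}')$.
   Context: Threat model. Fix local budget vectors $\mathbf{r}_{\mathbf{X}_\mathrm{add,loc}}, \mathbf{r}_{\mathbf{X}_\mathrm{del,loc}}, \mathbf{r}_{\mathbf{A}_\mathrm{add,loc}}, \mathbf{r}_{\mathbf{A}_\mathrm{del,loc}}\in\mathbb{N}_0^N$ and $\sigma\in\mathbb{N}$. For $\boldsymbol{\rho}=(\rho_1,\rho_2,\rho_3,\rho_4)\in\mathbb{N}_0^4$, $\mathbb{B}_{\mathcal{G}}(\boldsymbol{\rho})$ is the set of $(\mathbf{X}',\mathbf{A}')\in\mathbb{G}$ such that: $|\{(m,d): X_{m,d}=0\neq X'_{m,d}\}|\le\rho_1$, $|\{(m,d): X_{m,d}=1\neq X'_{m,d}\}|\le\rho_2$, $|\{(m,m'): A_{m,m'}=0\neq A'_{m,m'}\}|\le\rho_3$, $|\{(m,m'): A_{m,m'}=1\neq A'_{m,m'}\}|\le\rho_4$; for every node $m$: $|\{d: X_{m,d}=0\neq X'_{m,d}\}|\le (r_{\mathbf{X}_\mathrm{add,loc}})_m$, $|\{d: X_{m,d}=1\neq X'_{m,d}\}|\le (r_{\mathbf{X}_\mathrm{del,loc}})_m$, $|\{m': A_{m,m'}=0\neq A'_{m,m'}\}|\le (r_{\mathbf{A}_\mathrm{add,loc}})_m$,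 $|\{m': A_{m,m'}=1\neq A'_{m,m'}\}|\le (r_{\mathbf{A}_\mathrm{del,loc}})_m$; and there exists $\mathbb{S}\subseteq\{1,\dots,N\}$ with $|\mathbb{S}|\le\sigma$ such that for all $d$ and $m,m'$: $X'_{m,d}\neq X_{m,d}\Rightarrow m\in\mathbb{S}$ and $A'_{m,m'}\neq A_{m,m'}\Rightarrow (m\in\mathbb{S}\text{ or } m'\in\mathbb{S})$. Set $\mathbb{B}_{\mathcal{G}} = \mathbb{B}_{\mathcal{G}}\big((r_{\mathbf{X}_\mathrm{add}}, r_{\mathbf{X}_\mathrm{del}}, r_{\mathbf{A}_\mathrm{add}}, r_{\mathbf{A}_\mathrm{del}})\big)$. Receptive field indicators: $\boldsymbol{\psi}^{(n)}$, $\boldsymbol{\Psi}^{(n)}$ are receptive field indicators of $f_n$ if for all $(\mathbf{X}',\mathbf{A}'),(\tilde{\mathbf{X}},\tilde{\mathbf{A}})\in\mathbb{B}_{\mathcal{G}}$: whenever $\sum_{m=1}^N\sum_{d=1}^D \psi^{(n)}_m \mathbf{1}[X'_{m,d}\neq \tilde X_{m,d}] + \sum_{i,j=1}^N \Psi^{(n)}_{i,j}\mathbf{1}[A'_{i,j}\neq \tilde A_{i,j}] = 0$, we have $f_n(\mathbf{X}',\mathbf{A}') = f_n(\tilde{\mathbf{X}},\tilde{\mathbf{A}})$. Certifiable budgets: with $[k]=\{0,\dots,k\}$ and $\mathbb{L}=[r_{\mathbf{X}_\mathrm{add}}]\times[r_{\mathbf{X}_\mathrm{del}}]\times[r_{\mathbf{A}_\mathrm{add}}]\times[r_{\mathbf{A}_\mathrm{del}}]$,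 $\mathbb{K}^{(n)}$ is any subset of $\{\boldsymbol{\rho}\in\mathbb{L} : \forall (\mathbf{X}',\mathbf{A}')\in\mathbb{B}_{\mathcal{G}}(\boldsymbol{\rho}):\ f_n(\mathbf{X},\mathbf{A}) = f_n(\mathbf{X}',\mathbf{A}')\}$. *)

theory Defs
  imports Main
begin

text \<open>Conventions: nodes are indexed 0..N-1, features 0..D-1 (0-based).
  A feature matrix is a function X :: nat \<Rightarrow> nat \<Rightarrow> nat and an adjacency
  matrix a function A :: nat \<Rightarrow> nat \<Rightarrow> nat; entries inside the index range
  are in {0,1}, entries outside are 0 (so that matrices are determined by
  their N x D / N x N entries).\<close>

type_synonym mat = "nat \<Rightarrow> nat \<Rightarrow> nat"
type_synonym graph = "mat \<times> mat"

definition binmat :: "nat \<Rightarrow> nat \<Rightarrow> mat \<Rightarrow> bool" where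
  "binmat R K M \<longleftrightarrow> (\<forall>i j. (i < R \<and> j < K \<longrightarrow> M i j \<in> {0,1}) \<and>
                             (\<not>(i < R \<and> j < K) \<longrightarrow> M i j = 0))"

definition graphs :: "nat \<Rightarrow> nat \<Rightarrow> graph set" where
  "graphs N D = {(X, A). binmat N D X \<and> binmat N N A}"

definition ball ::
  "nat \<Rightarrow> nat \<Rightarrow> mat \<Rightarrow> mat \<Rightarrow> (nat \<Rightarrow> nat) \<Rightarrow> (nat \<Rightarrow> nat) \<Rightarrow> (nat \<Rightarrow> nat) \<Rightarrow> (nat \<Rightarrow> nat)
   \<Rightarrow> nat \<Rightarrow> nat \<times> nat \<times> nat \<times> nat \<Rightarrow> graph set" where
  "ball N D X A rXa rXd rAa rAd \<sigma> \<rho> =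
    (case \<rho> of (\<rho>1, \<rho>2, \<rho>3, \<rho>4) \<Rightarrow>
     {(X', A'). (X', A') \<in> graphs N D \<and>
       card {(m, d). m < N \<and> d < D \<and> X m d = 0 \<and> X' m d \<noteq> 0} \<le> \<rho>1 \<and>
       card {(m, d). m < N \<and> d < D \<and> X m d = 1 \<and> X' m d \<noteq> 1} \<le> \<rho>2 \<and>
       card {(m, m'). m < N \<and> m' < N \<and> A m m' = 0 \<and> A' m m' \<noteq> 0} \<le> \<rho>3 \<and>
       card {(m, m'). m < N \<and> m' < N \<and> A m m' = 1 \<and> A' m m' \<noteq> 1} \<le> \<rho>4 \<and>
       (\<forall>m < N.
          card {d. d < D \<and> X m d = 0 \<and> X' m d \<noteq> 0} \<le> rXa m \<and>
          card {d. d < D \<and> X m d = 1 \<and> X' m d \<noteq> 1} \<le> rXd m \<and>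
          card {m'. m' < N \<and> A m m' = 0 \<and> A' m m' \<noteq> 0} \<le> rAa m \<and>
          card {m'. m' < N \<and> A m m' = 1 \<and> A' m m' \<noteq> 1} \<le> rAd m) \<and>
       (\<exists>S. S \<subseteq> {..<N} \<and> card S \<le> \<sigma> \<and>
          (\<forall>m < N. \<forall>d < D. X' m d \<noteq> X m d \<longrightarrow> m \<in> S) \<and>
          (\<forall>m < N. \<forall>m' < N. A' m m' \<noteq> A m m' \<longrightarrow> m \<in> S \<or> m' \<in> S))})"

definition receptive_field ::
  "nat \<Rightarrow> nat \<Rightarrow> graph set \<Rightarrow> (graph \<Rightarrow> nat) \<Rightarrow> (nat \<Rightarrow> nat) \<Rightarrow> mat \<Rightarrow> bool" where
  "receptive_field N D B fn \<psi> \<Psi> \<longleftrightarrow>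
    (\<forall>X' A' Xt At. (X', A') \<in> B \<longrightarrow> (Xt, At) \<in> B \<longrightarrow>
       (\<Sum>m<N. \<Sum>d<D. \<psi> m * (if X' m d \<noteq> Xt m d then 1 else 0)) +
       (\<Sum>i<N. \<Sum>j<N. \<Psi> i j * (if A' i j \<noteq> At i j then 1 else 0)) = 0 \<longrightarrow>
       fn (X', A') = fn (Xt, At))"

definition certifiable_budgets ::
  "nat \<Rightarrow> nat \<Rightarrow> mat \<Rightarrow> mat \<Rightarrow> (nat \<Rightarrow> nat) \<Rightarrow> (nat \<Rightarrow> nat) \<Rightarrow> (nat \<Rightarrow> nat) \<Rightarrow> (nat \<Rightarrow> nat)
   \<Rightarrow> nat \<Rightarrow> nat \<Rightarrow> nat \<Rightarrow> nat \<Rightarrow> nat \<Rightarrow> (graph \<Rightarrow> nat) \<Rightarrow> (nat \<times> nat \<times> nat \<times> nat) set \<Rightarrow> bool" where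
  "certifiable_budgets N D X A rXa rXd rAa rAd \<sigma> rXadd rXdel rAadd rAdel fn K \<longleftrightarrow>
     K \<subseteq> {\<rho> \<in> {..rXadd} \<times> {..rXdel} \<times> {..rAadd} \<times> {..rAdel}.
            \<forall>g \<in> ball N D X A rXa rXd rAa rAd \<sigma> \<rho>. fn (X, A) = fn g}"

end

theory Submission
  imports Defs
begin

text \<open>Let \<open>(X'', A'')\<close> be the perturbed graph with every perturbation outside the
  receptive field of \<open>f\<^sub>n\<close> undone. It lies in \<open>\<bbbB>\<^sub>\<G>(\<rho>)\<close> for a certified budget \<open>\<rho>\<close>,
  so \<open>f\<^sub>n\<close> takes the clean value on it. Certified budgets are bounded by the global ones, so
  \<open>\<bbbB>\<^sub>\<G>(\<rho>) \<subseteq> \<bbbB>\<^sub>\<G>\<close>, where the receptive field indicators apply: \<open>(X'', A'')\<close> agrees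
  with \<open>(X', A')\<close> on the receptive field, so \<open>f\<^sub>n\<close> takes the same value on both.\<close>

definition blend :: "nat \<Rightarrow> nat \<Rightarrow> mat \<Rightarrow> mat \<Rightarrow> mat \<Rightarrow> mat" where
  "blend R K w M' M = (\<lambda>i j. if i < R \<and> j < K then w i j * M' i j + (1 - w i j) * M i j else 0)"

lemma blend_eq_where_weight_nonzero:
  assumes "\<forall>i < R. \<forall>j < K. w i j \<in> {0, 1}"
  shows "\<forall>i < R. \<forall>j < K. w i j \<noteq> 0 \<longrightarrow> M' i j = blend R K w M' M i j"
proof (intro allI impI)
  fix i j assume "i < R" "j < K" "w i j \<noteq> 0"
  from assms \<open>i < R\<close> \<open>j < K\<close> have "w i j \<in> {0, 1}" by blast
  with \<open>w i j \<noteq> 0\<close> have "w i j = 1" by simp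
  with \<open>i < R\<close> \<open>j < K\<close> show "M' i j = blend R K w M' M i j" unfolding blend_def by simp
qed

lemma ball_mono:
  assumes "a \<le> a'" "b \<le> b'" "c \<le> c'" "d \<le> d'"
  shows "ball N D X A rXa rXd rAa rAd \<sigma> (a, b, c, d) \<subseteq> ball N D X A rXa rXd rAa rAd \<sigma> (a', b', c', d')"
  using assms unfolding ball_def by auto

lemma receptive_field_eqI:
  assumes "receptive_field N D B fn \<psi> \<Psi>" "(X', A') \<in> B" "(Xt, At) \<in> B"
    and "\<forall>m < N. \<forall>d < D. \<psi> m \<noteq> 0 \<longrightarrow> X' m d = Xt m d"
    and "\<forall>i < N. \<forall>j < N. \<Psi> i j \<noteq> 0 \<longrightarrow> A' i j = At i j"
  shows "fn (X', A') = fn (Xt, At)"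
proof (rule assms(1)[unfolded receptive_field_def, rule_format, OF assms(2,3)])
  have "(\<Sum>m<N. \<Sum>d<D. \<psi> m * (if X' m d \<noteq> Xt m d then 1 else 0)) = 0"
    using assms(4) by auto
  moreover have "(\<Sum>i<N. \<Sum>j<N. \<Psi> i j * (if A' i j \<noteq> At i j then 1 else 0)) = 0"
    using assms(5) by auto
  ultimately show "(\<Sum>m<N. \<Sum>d<D. \<psi> m * (if X' m d \<noteq> Xt m d then 1 else 0)) +
      (\<Sum>i<N. \<Sum>j<N. \<Psi> i j * (if A' i j \<noteq> At i j then 1 else 0)) = 0"
    by simp
qed

lemma certifiable_budgets_ball:
  assumes "certifiable_budgets N D X A rXa rXd rAa rAd \<sigma> rXadd rXdel rAadd rAdel fn K"
    and "\<rho> \<in> K" "g \<in> ball N D X A rXa rXd rAa rAd \<sigma> \<rho>"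
  shows "g \<in> ball N D X A rXa rXd rAa rAd \<sigma> (rXadd, rXdel, rAadd, rAdel)"
    and "fn g = fn (X, A)"
proof -
  from assms(1,2) have "\<rho> \<in> {\<rho> \<in> {..rXadd} \<times> {..rXdel} \<times> {..rAadd} \<times> {..rAdel}.
      \<forall>g \<in> ball N D X A rXa rXd rAa rAd \<sigma> \<rho>. fn (X, A) = fn g}"
    unfolding certifiable_budgets_def by (rule subsetD)
  then have budget: "\<rho> \<in> {..rXadd} \<times> {..rXdel} \<times> {..rAadd} \<times> {..rAdel}"
    and certified: "\<forall>g \<in> ball N D X A rXa rXd rAa rAd \<sigma> \<rho>. fn (X, A) = fn g"
    by blast+
  obtain a b c d where \<rho>: "\<rho> = (a, b, c, d)" by (cases \<rho>) auto
  with budget have "a \<le> rXadd" "b \<le> rXdel" "c \<le> rAadd" "d \<le> rAdel" by auto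
  moreover from assms(3) have "g \<in> ball N D X A rXa rXd rAa rAd \<sigma> (a, b, c, d)" unfolding \<rho> .
  ultimately show "g \<in> ball N D X A rXa rXd rAa rAd \<sigma> (rXadd, rXdel, rAadd, rAdel)"
    using ball_mono by blast
  from certified assms(3) have "fn (X, A) = fn g" by (rule bspec)
  then show "fn g = fn (X, A)" by (rule sym)
qed

theorem lemma1:
  fixes N D C \<sigma> rXadd rXdel rAadd rAdel n :: nat
    and rXa rXd rAa rAd :: "nat \<Rightarrow> nat"
    and f :: "graph \<Rightarrow> nat \<Rightarrow> nat"
    and X A X' A' :: mat
    and \<psi> :: "nat \<Rightarrow> nat" and \<Psi> :: mat
    and K :: "(nat \<times> nat \<times> nat \<times> nat) set"
  assumes "N \<ge> 1" and "D \<ge> 1" and "C \<ge> 1" and "\<sigma> \<ge> 1"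
    and f_range: "\<forall>g \<in> graphs N D. \<forall>i < N. f g i \<in> {1..C}"
    and clean: "(X, A) \<in> graphs N D"
    and node: "n < N"
    and psi_bin: "\<forall>i < N. \<psi> i \<in> {0,1}"
    and Psi_bin: "\<forall>i < N. \<forall>j < N. \<Psi> i j \<in> {0,1}"
    and rf: "receptive_field N D
               (ball N D X A rXa rXd rAa rAd \<sigma> (rXadd, rXdel, rAadd, rAdel))
               (\<lambda>g. f g n) \<psi> \<Psi>"
    and cert: "certifiable_budgets N D X A rXa rXd rAa rAd \<sigma> rXadd rXdel rAadd rAdel
               (\<lambda>g. f g n) K"
    and pert: "(X', A') \<in> ball N D X A rXa rXd rAa rAd \<sigma> (rXadd, rXdel, rAadd, rAdel)"
    and ex: "\<exists>\<rho>. (\<lambda>i d. if i < N \<and> d < D then \<psi> i * X' i d + (1 - \<psi> i) * X i d else 0,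
                  \<lambda>i j. if i < N \<and> j < N then \<Psi> i j * A' i j + (1 - \<Psi> i j) * A i j else 0)
                 \<in> ball N D X A rXa rXd rAa rAd \<sigma> \<rho> \<and> \<rho> \<in> K"
  shows "f (X, A) n = f (X', A') n"
proof -
  define X'' where "X'' = blend N D (\<lambda>i d. \<psi> i) X' X"
  define A'' where "A'' = blend N N \<Psi> A' A"
  obtain \<rho> where \<rho>: "\<rho> \<in> K" "(X'', A'') \<in> ball N D X A rXa rXd rAa rAd \<sigma> \<rho>"
    using ex unfolding X''_def A''_def blend_def by blast
  have "\<forall>m < N. \<forall>d < D. \<psi> m \<noteq> 0 \<longrightarrow> X' m d = X'' m d"
    using blend_eq_where_weight_nonzero[of N D "\<lambda>i d. \<psi> i"] psi_bin unfolding X''_def by simp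
  moreover have "\<forall>i < N. \<forall>j < N. \<Psi> i j \<noteq> 0 \<longrightarrow> A' i j = A'' i j"
    using blend_eq_where_weight_nonzero[of N N \<Psi>] Psi_bin unfolding A''_def by simp
  ultimately have "f (X', A') n = f (X'', A'') n"
    by (rule receptive_field_eqI[OF rf pert certifiable_budgets_ball(1)[OF cert \<rho>]])
  also have "\<dots> = f (X, A) n"
    using certifiable_budgets_ball(2)[OF cert \<rho>] .
  finally show ?thesis by simp
qed

end
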